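(* Let $n\ge0$ and let $\mathcal V$ be a variety with $n+2$ Gumm terms. If $h\ge0$ and $m=4h+2$, then $\mathcal V$ satisfies $$\alpha(\beta\circ_{m+1}\gamma)\subseteq\alpha(\gamma\circ_{2h+2}\beta)\circ(\alpha\gamma\circ_{mn}\alpha\beta)\quad\text{and}\quad \alpha(\beta\circ_{m+1}\gamma)\subseteq(\alpha\beta\circ_{mn}\alpha\gamma)\circ\alpha(\beta\circ_{2h+2}\gamma).$$ If $h\ge1$ and $m=4h$, then $\mathcal V$ satisfies $$\alpha(\beta\circ_{m+1}\gamma)\subseteq\alpha(\beta\circ_{2h+1}\gamma)\circ(\alpha\gamma\circ_{mn}\alpha\beta).$$
   Context: Here $\alpha,\beta,\gamma$ range over congruences of algebras in $\mathcal V$. $\circ$ is relational composition, juxtaposition is intersection. For relations $X,Y$ and $m\ge1$, $X\circ_m Y$ denotes $X\circ Y\circ X\circ\cdots$ with $m$ factors; $X\circ_0Y$ is the identity relation. A variety has $n+2$ Gumm terms if it has ternary terms $p,j_1,\dots,j_{n+1}$ satisfying: $x=j_i(x,y,x)$ for all $i$; $x=p(x,z,z)$; $p(x,x,z)=j_1(x,x,z)$; $j_i(x,z,z)=j_{i+1}(x,z,z)$ for odd $i\le n$; $j_i(x,x,z)=j_{i+1}(x,x,z)$ for even $i\le n$; $j_{n+1}(x,y,z)=z$. *)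

theory Defs
  imports Main
begin

datatype 'f trm = Var nat | Op 'f "'f trm list"

fun wf_trm :: "('f \<Rightarrow> nat) \<Rightarrow> 'f trm \<Rightarrow> bool" where
  "wf_trm ar (Var i) = True"
| "wf_trm ar (Op f ts) = (length ts = ar f \<and> (\<forall>t\<in>set ts. wf_trm ar t))"

fun vars_trm :: "'f trm \<Rightarrow> nat set" where
  "vars_trm (Var i) = {i}"
| "vars_trm (Op f ts) = (\<Union>t\<in>set ts. vars_trm t)"

fun trm_subst :: "(nat \<Rightarrow> 'f trm) \<Rightarrow> 'f trm \<Rightarrow> 'f trm" where
  "trm_subst \<sigma> (Var i) = \<sigma> i"
| "trm_subst \<sigma> (Op f ts) = Op f (map (trm_subst \<sigma>) ts)"

fun eval_trm :: "('f \<Rightarrow> 'a list \<Rightarrow> 'a) \<Rightarrow> (nat \<Rightarrow> 'a) \<Rightarrow> 'f trm \<Rightarrow> 'a" where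
  "eval_trm F v (Var i) = v i"
| "eval_trm F v (Op f ts) = F f (map (eval_trm F v) ts)"

definition is_algebra :: "('f \<Rightarrow> nat) \<Rightarrow> 'a set \<Rightarrow> ('f \<Rightarrow> 'a list \<Rightarrow> 'a) \<Rightarrow> bool" where
  "is_algebra ar A F \<longleftrightarrow>
     (\<forall>f as. length as = ar f \<longrightarrow> set as \<subseteq> A \<longrightarrow> F f as \<in> A)"

definition satisfies_id :: "'a set \<Rightarrow> ('f \<Rightarrow> 'a list \<Rightarrow> 'a) \<Rightarrow> 'f trm \<times> 'f trm \<Rightarrow> bool" where
  "satisfies_id A F e \<longleftrightarrow>
     (\<forall>v. (\<forall>i. v i \<in> A) \<longrightarrow> eval_trm F v (fst e) = eval_trm F v (snd e))"

text \<open>The variety defined by the set of identities Sig (Birkhoff: every variety is of this form).\<close>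
definition in_variety :: "('f \<Rightarrow> nat) \<Rightarrow> ('f trm \<times> 'f trm) set \<Rightarrow> 'a set \<Rightarrow> ('f \<Rightarrow> 'a list \<Rightarrow> 'a) \<Rightarrow> bool" where
  "in_variety ar Sig A F \<longleftrightarrow> is_algebra ar A F \<and> (\<forall>e\<in>Sig. satisfies_id A F e)"

text \<open>Equational consequence (Birkhoff's equational logic); by completeness this is
  exactly "the identity holds in every algebra of the variety".\<close>
inductive derivable :: "('f \<Rightarrow> nat) \<Rightarrow> ('f trm \<times> 'f trm) set \<Rightarrow> 'f trm \<Rightarrow> 'f trm \<Rightarrow> bool"
  for ar Sig where
  ax: "(s, t) \<in> Sig \<Longrightarrow> derivable ar Sig s t"
| refl: "derivable ar Sig t t"
| sym: "derivable ar Sig s t \<Longrightarrow> derivable ar Sig t s"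
| trans: "derivable ar Sig s t \<Longrightarrow> derivable ar Sig t u \<Longrightarrow> derivable ar Sig s u"
| subst: "derivable ar Sig s t \<Longrightarrow> (\<forall>i. wf_trm ar (\<sigma> i)) \<Longrightarrow>
           derivable ar Sig (trm_subst \<sigma> s) (trm_subst \<sigma> t)"
| cong: "length ss = ar f \<Longrightarrow> list_all2 (derivable ar Sig) ss ts \<Longrightarrow>
           derivable ar Sig (Op f ss) (Op f ts)"

definition ternary_trm :: "('f \<Rightarrow> nat) \<Rightarrow> 'f trm \<Rightarrow> bool" where
  "ternary_trm ar t \<longleftrightarrow> wf_trm ar t \<and> vars_trm t \<subseteq> {0, 1, 2}"

definition app3 :: "'f trm \<Rightarrow> 'f trm \<Rightarrow> 'f trm \<Rightarrow> 'f trm \<Rightarrow> 'f trm" where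
  "app3 t a b c = trm_subst (\<lambda>i. if i = 0 then a else if i = 1 then b else if i = 2 then c else Var i) t"

abbreviation vx :: "'f trm" where "vx \<equiv> Var 0"
abbreviation vy :: "'f trm" where "vy \<equiv> Var 1"
abbreviation vz :: "'f trm" where "vz \<equiv> Var 2"

text \<open>The variety with identities Sig has n+2 Gumm terms p, j 1, ..., j (n+1).\<close>
definition gumm_terms ::
  "('f \<Rightarrow> nat) \<Rightarrow> ('f trm \<times> 'f trm) set \<Rightarrow> nat \<Rightarrow> 'f trm \<Rightarrow> (nat \<Rightarrow> 'f trm) \<Rightarrow> bool" where
  "gumm_terms ar Sig n p j \<longleftrightarrow>
     ternary_trm ar p \<and> (\<forall>i\<in>{1..n+1}. ternary_trm ar (j i)) \<and>
     (\<forall>i\<in>{1..n+1}. derivable ar Sig vx (app3 (j i) vx vy vx)) \<and>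
     derivable ar Sig vx (app3 p vx vz vz) \<and>
     derivable ar Sig (app3 p vx vx vz) (app3 (j 1) vx vx vz) \<and>
     (\<forall>i\<in>{1..n}. odd i \<longrightarrow> derivable ar Sig (app3 (j i) vx vz vz) (app3 (j (i+1)) vx vz vz)) \<and>
     (\<forall>i\<in>{1..n}. even i \<longrightarrow> derivable ar Sig (app3 (j i) vx vx vz) (app3 (j (i+1)) vx vx vz)) \<and>
     derivable ar Sig (app3 (j (n+1)) vx vy vz) vz"

definition is_congruence :: "('f \<Rightarrow> nat) \<Rightarrow> 'a set \<Rightarrow> ('f \<Rightarrow> 'a list \<Rightarrow> 'a) \<Rightarrow> 'a rel \<Rightarrow> bool" where
  "is_congruence ar A F \<theta> \<longleftrightarrow> equiv A \<theta> \<and>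
     (\<forall>f as bs. length as = ar f \<longrightarrow> list_all2 (\<lambda>a b. (a, b) \<in> \<theta>) as bs \<longrightarrow> (F f as, F f bs) \<in> \<theta>)"

fun altcomp :: "'a rel \<Rightarrow> 'a rel \<Rightarrow> nat \<Rightarrow> 'a rel" where
  "altcomp X Y 0 = Id"
| "altcomp X Y (Suc m) = X O altcomp Y X m"

end

theory Submission
  imports Defs
begin

text \<open>
  Let \<open>a = x_0 \<beta> x_1 \<gamma> x_2 \<beta> \<dots> x_N = c\<close> with \<open>N = 2M + 1\<close> and \<open>a \<alpha> c\<close>. Running the path
  forwards in the second and backwards in the third argument, \<open>p(a, x_k, x_(N-k))\<close> walks in \<open>M + 1\<close>
  alternating steps from \<open>p(a, a, c) = j_1(a, a, c)\<close> to \<open>p(a, x_(M+1), x_(M+1)) = a\<close>; hence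
  \<open>d = j_1(a, x_1, c)\<close> satisfies \<open>a \<alpha> d\<close> and \<open>d (\<beta> \<circ>_(M+1) \<gamma>) a\<close>. Every \<open>j_i(a, x_k, c)\<close> is
  \<open>\<alpha>\<close>-related to \<open>j_i(a, x_k, a) = a\<close>, so the path \<open>x_1, \<dots>, x_N\<close> yields \<open>2M\<close> alternating
  \<open>\<alpha>\<gamma>\<close>/\<open>\<alpha>\<beta>\<close>-steps from \<open>j_i(a, x_1, c)\<close> to \<open>j_i(a, c, c)\<close>, and the Gumm identities glue these
  \<open>n + 1\<close> walks into one of length \<open>2Mn\<close> from \<open>d\<close> to \<open>c\<close>. Taking \<open>M = 2h + 1\<close> or \<open>M = 2h\<close> gives
  the inclusions; for \<open>m = 4h + 2\<close> the second one is the converse of the first.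
\<close>

section \<open>Term operations\<close>

lemma eval_trm_closed:
  "is_algebra ar A F \<Longrightarrow> wf_trm ar t \<Longrightarrow> (\<forall>i. \<sigma> i \<in> A) \<Longrightarrow> eval_trm F \<sigma> t \<in> A"
proof (induction t)
  case (Op f ts)
  then have "set (map (eval_trm F \<sigma>) ts) \<subseteq> A" by auto
  then show ?case using Op.prems unfolding is_algebra_def by simp
qed simp

lemma eval_trm_cong:
  "\<forall>i\<in>vars_trm t. \<sigma> i = \<sigma>' i \<Longrightarrow> eval_trm F \<sigma> t = eval_trm F \<sigma>' t"
proof (induction t)
  case (Op f ts)
  then have "map (eval_trm F \<sigma>) ts = map (eval_trm F \<sigma>') ts" by (auto simp: map_eq_conv)
  then show ?case by (simp only: eval_trm.simps)
qed simp

lemma eval_trm_subst: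
  "eval_trm F \<sigma> (trm_subst \<tau> t) = eval_trm F (\<lambda>i. eval_trm F \<sigma> (\<tau> i)) t"
  by (induction t) (simp_all cong: map_cong)

lemma derivable_sound:
  assumes alg: "in_variety ar Sig A F"
  shows "derivable ar Sig s t \<Longrightarrow> (\<forall>i. \<sigma> i \<in> A) \<Longrightarrow> eval_trm F \<sigma> s = eval_trm F \<sigma> t"
proof (induction arbitrary: \<sigma> rule: derivable.induct)
  case (ax s t)
  then show ?case using alg unfolding in_variety_def satisfies_id_def by fastforce
next
  case (subst s t \<tau>)
  have "\<forall>i. eval_trm F \<sigma> (\<tau> i) \<in> A"
    using subst alg eval_trm_closed unfolding in_variety_def by blast
  then show ?case using subst by (simp add: eval_trm_subst)
next
  case (cong ss f ts)
  have "map (eval_trm F \<sigma>) ss = map (eval_trm F \<sigma>) ts"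
    using cong.IH cong.prems by (induction ss ts rule: list_all2_induct) auto
  then show ?case by simp
qed simp_all

lemma eval_trm_congruence:
  assumes "is_congruence ar A F \<theta>"
  shows "wf_trm ar t \<Longrightarrow> (\<forall>i. (\<sigma> i, \<sigma>' i) \<in> \<theta>) \<Longrightarrow> (eval_trm F \<sigma> t, eval_trm F \<sigma>' t) \<in> \<theta>"
proof (induction t)
  case (Op f ts)
  have "list_all2 (\<lambda>a b. (a, b) \<in> \<theta>) (map (eval_trm F \<sigma>) ts) (map (eval_trm F \<sigma>') ts)"
    using Op by (simp add: list_all2_map1 list_all2_map2 list_all2_same)
  then show ?case using assms Op.prems unfolding is_congruence_def by simp
qed simp

text \<open>Variables other than \<open>x, y, z\<close> are sent to \<open>w\<close>, so the valuation stays inside the carrier.\<close>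

definition val3 :: "'a \<Rightarrow> 'a \<Rightarrow> 'a \<Rightarrow> nat \<Rightarrow> 'a" where
  "val3 u v w i = (if i = 0 then u else if i = 1 then v else w)"

definition eval3 :: "('f \<Rightarrow> 'a list \<Rightarrow> 'a) \<Rightarrow> 'f trm \<Rightarrow> 'a \<Rightarrow> 'a \<Rightarrow> 'a \<Rightarrow> 'a" where
  "eval3 F t u v w = eval_trm F (val3 u v w) t"

lemma eval_app3:
  assumes "ternary_trm ar t"
  shows "eval_trm F \<sigma> (app3 t a b c) = eval3 F t (eval_trm F \<sigma> a) (eval_trm F \<sigma> b) (eval_trm F \<sigma> c)"
  unfolding app3_def eval3_def eval_trm_subst
  by (rule eval_trm_cong) (use assms in \<open>auto simp: ternary_trm_def val3_def\<close>)

lemma derivable_eval_val3: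
  assumes "in_variety ar Sig A F" "derivable ar Sig s t" "u \<in> A" "v \<in> A" "w \<in> A"
  shows "eval_trm F (val3 u v w) s = eval_trm F (val3 u v w) t"
  using derivable_sound[OF assms(1,2)] assms(3-5) by (simp add: val3_def)

section \<open>Alternating relational products\<close>

lemma altcomp_Suc_right:
  "altcomp X Y (Suc N) = altcomp X Y N O (if even N then X else Y)"
proof (induction N arbitrary: X Y)
  case (Suc N)
  have "altcomp X Y (Suc (Suc N)) = X O (altcomp Y X N O (if even N then Y else X))"
    using Suc by simp
  then show ?case by (simp add: O_assoc)
qed simp

lemma altcomp_add:
  "altcomp X Y (k + l) = altcomp X Y k O (if even k then altcomp X Y l else altcomp Y X l)"
  by (induction k arbitrary: X Y) (auto simp: O_assoc)

lemma converse_altcomp: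
  assumes "sym X" "sym Y"
  shows "converse (altcomp X Y N) = (if even N then altcomp Y X N else altcomp X Y N)"
  using assms
proof (induction N arbitrary: X Y)
  case (Suc N)
  have "converse X = X" using Suc.prems sym_conv_converse_eq by auto
  then have "converse (altcomp X Y (Suc N)) = (if even N then altcomp X Y N else altcomp Y X N) O X"
    using Suc by (simp add: converse_relcomp)
  then show ?case
    using altcomp_Suc_right[of X Y N] altcomp_Suc_right[of Y X N]
    by (cases "even N") (simp_all del: altcomp.simps)
qed simp

lemma altcomp_map:
  assumes "(u, v) \<in> altcomp X Y k"
    and "\<And>u v. (u, v) \<in> X \<Longrightarrow> (f u, f v) \<in> X'" "\<And>u v. (u, v) \<in> Y \<Longrightarrow> (f u, f v) \<in> Y'"
  shows "(f u, f v) \<in> altcomp X' Y' k"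
  using assms
proof (induction k arbitrary: X Y X' Y' u)
  case (Suc k)
  then obtain w where uw: "(u, w) \<in> X" and wv: "(w, v) \<in> altcomp Y X k" by auto
  have "(f u, f w) \<in> X'" by (rule Suc.prems(2)[OF uw])
  moreover have "(f w, f v) \<in> altcomp Y' X' k" by (rule Suc.IH[OF wv Suc.prems(3,2)])
  ultimately show ?case by auto
qed simp

lemma altcomp_map2:
  assumes "(u, u') \<in> altcomp X Y k" "(v, v') \<in> altcomp X Y k"
    and "\<And>u u' v v'. (u, u') \<in> X \<Longrightarrow> (v, v') \<in> X \<Longrightarrow> (f u v, f u' v') \<in> X'"
    and "\<And>u u' v v'. (u, u') \<in> Y \<Longrightarrow> (v, v') \<in> Y \<Longrightarrow> (f u v, f u' v') \<in> Y'"
  shows "(f u v, f u' v') \<in> altcomp X' Y' k"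
  using assms
proof (induction k arbitrary: X Y X' Y' u v)
  case (Suc k)
  then obtain w w' where uw: "(u, w) \<in> X" and wu: "(w, u') \<in> altcomp Y X k"
    and vw: "(v, w') \<in> X" and wv: "(w', v') \<in> altcomp Y X k" by auto
  have "(f u v, f w w') \<in> X'" by (rule Suc.prems(3)[OF uw vw])
  moreover have "(f w w', f u' v') \<in> altcomp Y' X' k" by (rule Suc.IH[OF wu wv Suc.prems(4,3)])
  ultimately show ?case by auto
qed simp

lemma altcomp_odd_split:
  assumes "sym X" "sym Y" "(a, c) \<in> altcomp X Y (2 * M + 1)"
  obtains x y where "(a, x) \<in> altcomp X Y M" "(x, y) \<in> (if even M then X else Y)"
    "(c, y) \<in> altcomp X Y M"
proof -
  have "2 * M + 1 = M + Suc M" by simp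
  then have "(a, c) \<in> altcomp X Y M O (if even M then altcomp X Y (Suc M) else altcomp Y X (Suc M))"
    using assms(3) altcomp_add[of X Y M "Suc M"] by argo
  then obtain x y where "(a, x) \<in> altcomp X Y M" "(x, y) \<in> (if even M then X else Y)"
    "(y, c) \<in> (if even M then altcomp Y X M else altcomp X Y M)"
    by (cases "even M") (auto simp del: altcomp.simps simp: altcomp.simps(2))
  moreover have "converse (if even M then altcomp Y X M else altcomp X Y M) = altcomp X Y M"
    using converse_altcomp[OF assms(2,1), of M] converse_altcomp[OF assms(1,2), of M] by simp
  ultimately show ?thesis using that by blast
qed

lemma altcomp_merge:
  assumes "trans Y" "even N" "0 < N" "even m"
  shows "altcomp X Y N O altcomp Y X m O Y \<subseteq> altcomp X Y (N + m)"
proof -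
  obtain N' where N': "N = Suc N'" "odd N'" using assms(2,3) by (cases N) auto
  have absorb: "altcomp X Y N O Y \<subseteq> altcomp X Y N"
  proof -
    have "altcomp X Y N = altcomp X Y N' O Y" using N' altcomp_Suc_right[of X Y N'] by simp
    moreover have "Y O Y \<subseteq> Y" using assms(1) trans_O_subset by blast
    ultimately show ?thesis by (simp add: O_assoc relcomp_mono)
  qed
  have "altcomp Y X m O Y = Y O altcomp X Y m"
    using altcomp_Suc_right[of Y X m] assms(4) by simp
  then have "altcomp X Y N O altcomp Y X m O Y = (altcomp X Y N O Y) O altcomp X Y m"
    by (simp add: O_assoc)
  also have "\<dots> \<subseteq> altcomp X Y N O altcomp X Y m"
    using absorb by (rule relcomp_mono) simp
  also have "\<dots> = altcomp X Y (N + m)"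
    using altcomp_add[of X Y N m] assms(2) by simp
  finally show ?thesis .
qed

text \<open>
  The walk \<open>e_1 \<rightarrow> f_1 = f_2 \<rightarrow> e_2 \<rightarrow> g_2 = g_3 \<rightarrow> e_3 \<rightarrow> f_3 = f_4 \<rightarrow> \<dots>\<close>; after \<open>l\<close> legs it
  stands at \<open>e_(l+1)\<close> or \<open>f_(l+1)\<close> according to the parity of \<open>l\<close>.
\<close>

lemma altcomp_zigzag:
  assumes "sym X" "sym Y" "trans Y" "even m" "0 < m"
    and leg: "\<And>i. i \<in> {1..n+1} \<Longrightarrow> (e i, f i) \<in> altcomp X Y m"
    and step: "\<And>i. i \<in> {1..n+1} \<Longrightarrow> (e i, g i) \<in> Y"
    and f_eq: "\<And>i. i \<in> {1..n} \<Longrightarrow> odd i \<Longrightarrow> f i = f (Suc i)"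
    and g_eq: "\<And>i. i \<in> {1..n} \<Longrightarrow> even i \<Longrightarrow> g i = g (Suc i)"
    and "l \<le> n"
  shows "(e 1, if even l then e (Suc l) else f (Suc l)) \<in> altcomp X Y (l * m)"
  using \<open>l \<le> n\<close>
proof (induction l)
  case (Suc l)
  then have IH: "(e 1, if even l then e (Suc l) else f (Suc l)) \<in> altcomp X Y (l * m)"
    and l: "Suc l \<in> {1..n}" by auto
  show ?case
  proof (cases "even l")
    case True
    have "(e 1, f (Suc l)) \<in> altcomp X Y (l * m) O altcomp X Y m"
      using IH True leg l by auto
    then show ?thesis
      using True f_eq[OF l] altcomp_add[of X Y "l * m" m] by (simp add: add.commute)
  next
    case False
    have "(f (Suc l), e (Suc l)) \<in> altcomp Y X m"
      using leg[of "Suc l"] l converse_altcomp[OF assms(1,2), of m] \<open>even m\<close> by auto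
    moreover have "(e (Suc l), e (Suc (Suc l))) \<in> Y"
      using step[of "Suc l"] step[of "Suc (Suc l)"] g_eq[OF l] l False assms(2,3)
      by (auto dest: symD transD)
    ultimately have "(e 1, e (Suc (Suc l))) \<in> altcomp X Y (l * m) O altcomp Y X m O Y"
      using IH False by auto
    moreover have "altcomp X Y (l * m) O altcomp Y X m O Y \<subseteq> altcomp X Y (l * m + m)"
      by (rule altcomp_merge[OF assms(3)]) (use False odd_pos \<open>even m\<close> \<open>0 < m\<close> in auto)
    ultimately show ?thesis using False by (auto simp: add.commute)
  qed
qed simp

section \<open>Gumm operations\<close>

definition compatible3 :: "'a rel \<Rightarrow> ('a \<Rightarrow> 'a \<Rightarrow> 'a \<Rightarrow> 'a) \<Rightarrow> bool" where
  "compatible3 \<theta> t \<longleftrightarrow>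
     (\<forall>u u' v v' w w'. (u, u') \<in> \<theta> \<longrightarrow> (v, v') \<in> \<theta> \<longrightarrow> (w, w') \<in> \<theta> \<longrightarrow> (t u v w, t u' v' w') \<in> \<theta>)"

locale gumm_operations =
  fixes A :: "'a set" and p :: "'a \<Rightarrow> 'a \<Rightarrow> 'a \<Rightarrow> 'a" and J :: "nat \<Rightarrow> 'a \<Rightarrow> 'a \<Rightarrow> 'a \<Rightarrow> 'a"
    and n :: nat
  assumes J_xyx: "i \<in> {1..n+1} \<Longrightarrow> u \<in> A \<Longrightarrow> v \<in> A \<Longrightarrow> J i u v u = u"
    and p_xzz: "u \<in> A \<Longrightarrow> w \<in> A \<Longrightarrow> p u w w = u"
    and p_xxz: "u \<in> A \<Longrightarrow> w \<in> A \<Longrightarrow> p u u w = J 1 u u w"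
    and J_odd_xzz: "i \<in> {1..n} \<Longrightarrow> odd i \<Longrightarrow> u \<in> A \<Longrightarrow> w \<in> A \<Longrightarrow> J i u w w = J (Suc i) u w w"
    and J_even_xxz: "i \<in> {1..n} \<Longrightarrow> even i \<Longrightarrow> u \<in> A \<Longrightarrow> w \<in> A \<Longrightarrow> J i u u w = J (Suc i) u u w"
    and J_last: "u \<in> A \<Longrightarrow> v \<in> A \<Longrightarrow> w \<in> A \<Longrightarrow> J (Suc n) u v w = w"
begin

definition congruence :: "'a rel \<Rightarrow> bool" where
  "congruence \<theta> \<longleftrightarrow> equiv A \<theta> \<and> compatible3 \<theta> p \<and> (\<forall>i\<in>{1..n+1}. compatible3 \<theta> (J i))"

lemma congruenceD:
  assumes "congruence \<theta>"
  shows "\<theta> \<subseteq> A \<times> A" "sym \<theta>" "trans \<theta>" "a \<in> A \<Longrightarrow> (a, a) \<in> \<theta>"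
  using assms unfolding congruence_def equiv_def refl_on_def by auto

lemma congruence_p:
  "congruence \<theta> \<Longrightarrow> (u, u') \<in> \<theta> \<Longrightarrow> (v, v') \<in> \<theta> \<Longrightarrow> (w, w') \<in> \<theta> \<Longrightarrow> (p u v w, p u' v' w') \<in> \<theta>"
  unfolding congruence_def compatible3_def by blast

lemma congruence_J:
  "congruence \<theta> \<Longrightarrow> i \<in> {1..n+1} \<Longrightarrow> (u, u') \<in> \<theta> \<Longrightarrow> (v, v') \<in> \<theta> \<Longrightarrow> (w, w') \<in> \<theta>
   \<Longrightarrow> (J i u v w, J i u' v' w') \<in> \<theta>"
  unfolding congruence_def compatible3_def by blast

lemma p_walk:
  assumes \<beta>: "congruence \<beta>" and \<gamma>: "congruence \<gamma>" and ac: "(a, c) \<in> altcomp \<beta> \<gamma> (2 * M + 1)"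
  shows "(p a a c, a) \<in> altcomp \<beta> \<gamma> (Suc M)"
proof -
  define B where "B = (if even M then \<beta> else \<gamma>)"
  have B: "congruence B" using \<beta> \<gamma> by (simp add: B_def)
  obtain x y where ax: "(a, x) \<in> altcomp \<beta> \<gamma> M" and xy: "(x, y) \<in> B"
    and cy: "(c, y) \<in> altcomp \<beta> \<gamma> M"
    using altcomp_odd_split[OF congruenceD(2)[OF \<beta>] congruenceD(2)[OF \<gamma>] ac] B_def by blast
  have aA: "a \<in> A" using ac congruenceD(1)[OF \<beta>] by auto
  have yA: "y \<in> A" using xy congruenceD(1)[OF B] by auto
  have pa: "(p a u v, p a u' v') \<in> \<theta>" if "congruence \<theta>" "(u, u') \<in> \<theta>" "(v, v') \<in> \<theta>"
    for \<theta> u u' v v'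
    using congruence_p[OF that(1) congruenceD(4)[OF that(1) aA] that(2,3)] .
  have "(p a a c, p a x y) \<in> altcomp \<beta> \<gamma> M"
    by (rule altcomp_map2[OF ax cy]) (auto intro: pa \<beta> \<gamma>)
  moreover have "(p a x y, p a y y) \<in> B"
    using pa[OF B xy congruenceD(4)[OF B yA]] .
  ultimately show ?thesis using altcomp_Suc_right[of \<beta> \<gamma> M] p_xzz[OF aA yA] B_def by auto
qed

lemma J_walk:
  assumes \<alpha>: "congruence \<alpha>" and \<beta>: "congruence \<beta>" and \<gamma>: "congruence \<gamma>"
    and ac: "(a, c) \<in> \<alpha>" and ab: "(a, b) \<in> \<beta>" and bc: "(b, c) \<in> altcomp \<gamma> \<beta> m"
    and "even m" "0 < m"
  shows "(J 1 a b c, c) \<in> altcomp (\<alpha> \<inter> \<gamma>) (\<alpha> \<inter> \<beta>) (m * n)"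
proof -
  note \<alpha>D = congruenceD[OF \<alpha>] and \<beta>D = congruenceD[OF \<beta>] and \<gamma>D = congruenceD[OF \<gamma>]
  have A: "a \<in> A" "b \<in> A" "c \<in> A" using ac ab \<alpha>D(1) \<beta>D(1) by auto
  have to_a: "(J i a u c, a) \<in> \<alpha>" if "i \<in> {1..n+1}" "u \<in> A" for i u
    using congruence_J[OF \<alpha> that(1) \<alpha>D(4)[OF A(1)] \<alpha>D(4)[OF that(2)] symD[OF \<alpha>D(2) ac]]
      J_xyx[OF that(1) A(1) that(2)] by simp
  have \<alpha>_rel: "(J i a u c, J i a v c) \<in> \<alpha>" if "i \<in> {1..n+1}" "u \<in> A" "v \<in> A" for i u v
    using to_a[OF that(1,2)] to_a[OF that(1,3)] \<alpha>D(2,3) by (blast dest: symD transD)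
  have lift: "(J i a u c, J i a v c) \<in> \<alpha> \<inter> \<theta>"
    if "i \<in> {1..n+1}" "congruence \<theta>" "(u, v) \<in> \<theta>" for i \<theta> u v
  proof
    have "u \<in> A" "v \<in> A" using that(3) congruenceD(1)[OF that(2)] by auto
    then show "(J i a u c, J i a v c) \<in> \<alpha>" using \<alpha>_rel[OF that(1)] by blast
    show "(J i a u c, J i a v c) \<in> \<theta>"
      using congruence_J[OF that(2,1)] congruenceD(4)[OF that(2)] A that(3) by blast
  qed
  have "(J 1 a b c, if even n then J (Suc n) a b c else J (Suc n) a c c)
          \<in> altcomp (\<alpha> \<inter> \<gamma>) (\<alpha> \<inter> \<beta>) (n * m)"
  proof (rule altcomp_zigzag[where g = "\<lambda>i. J i a a c"])
    show "sym (\<alpha> \<inter> \<gamma>)" "sym (\<alpha> \<inter> \<beta>)" "trans (\<alpha> \<inter> \<beta>)"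
      using \<alpha>D \<beta>D \<gamma>D by (auto intro: sym_Int trans_Int)
    show "(J i a b c, J i a c c) \<in> altcomp (\<alpha> \<inter> \<gamma>) (\<alpha> \<inter> \<beta>) m" if "i \<in> {1..n+1}" for i
      by (rule altcomp_map[OF bc]) (erule lift[OF that \<gamma>], erule lift[OF that \<beta>])
    show "(J i a b c, J i a a c) \<in> \<alpha> \<inter> \<beta>" if "i \<in> {1..n+1}" for i
      using lift[OF that \<beta> symD[OF \<beta>D(2) ab]] .
    show "J i a c c = J (Suc i) a c c" if "i \<in> {1..n}" "odd i" for i
      using J_odd_xzz[OF that A(1,3)] .
    show "J i a a c = J (Suc i) a a c" if "i \<in> {1..n}" "even i" for i
      using J_even_xxz[OF that A(1,3)] .
  qed (use \<open>even m\<close> \<open>0 < m\<close> in simp_all)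
  moreover have "(if even n then J (Suc n) a b c else J (Suc n) a c c) = c"
    using J_last[OF A] J_last[OF A(1,3,3)] by simp
  ultimately show ?thesis by (simp add: mult.commute)
qed

lemma Int_altcomp_odd_subset:
  assumes \<alpha>: "congruence \<alpha>" and \<beta>: "congruence \<beta>" and \<gamma>: "congruence \<gamma>" and "1 \<le> M"
  shows "\<alpha> \<inter> altcomp \<beta> \<gamma> (2 * M + 1)
           \<subseteq> (\<alpha> \<inter> converse (altcomp \<beta> \<gamma> (Suc M))) O altcomp (\<alpha> \<inter> \<gamma>) (\<alpha> \<inter> \<beta>) (2 * M * n)"
proof (clarify)
  fix a c assume ac: "(a, c) \<in> \<alpha>" and walk: "(a, c) \<in> altcomp \<beta> \<gamma> (2 * M + 1)"
  note \<alpha>D = congruenceD[OF \<alpha>] and \<beta>D = congruenceD[OF \<beta>]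
  obtain b where ab: "(a, b) \<in> \<beta>" and bc: "(b, c) \<in> altcomp \<gamma> \<beta> (2 * M)"
    using walk by auto
  have A: "a \<in> A" "b \<in> A" "c \<in> A" using ac ab \<alpha>D(1) \<beta>D(1) by auto
  have one: "1 \<in> {1..n+1}" by simp
  define d where "d = J 1 a b c"
  have "(d, p a a c) \<in> \<beta>"
    using congruence_J[OF \<beta> one \<beta>D(4)[OF A(1)] symD[OF \<beta>D(2) ab] \<beta>D(4)[OF A(3)]]
      p_xxz[OF A(1,3)] by (simp add: d_def)
  moreover obtain w where "(p a a c, w) \<in> \<beta>" "(w, a) \<in> altcomp \<gamma> \<beta> M"
    using p_walk[OF \<beta> \<gamma> walk] by auto
  ultimately have "(d, a) \<in> altcomp \<beta> \<gamma> (Suc M)"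
    using transD[OF \<beta>D(3)] by auto
  moreover have "(d, a) \<in> \<alpha>"
    using congruence_J[OF \<alpha> one \<alpha>D(4)[OF A(1)] \<alpha>D(4)[OF A(2)] symD[OF \<alpha>D(2) ac]]
      J_xyx[OF one A(1,2)] by (simp add: d_def)
  moreover have "(d, c) \<in> altcomp (\<alpha> \<inter> \<gamma>) (\<alpha> \<inter> \<beta>) (2 * M * n)"
    unfolding d_def using J_walk[OF \<alpha> \<beta> \<gamma> ac ab bc] \<open>1 \<le> M\<close> by simp
  ultimately show "(a, c) \<in> (\<alpha> \<inter> converse (altcomp \<beta> \<gamma> (Suc M))) O altcomp (\<alpha> \<inter> \<gamma>) (\<alpha> \<inter> \<beta>) (2 * M * n)"
    using symD[OF \<alpha>D(2)] by blast
qed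

end

lemma gumm_operations_eval3:
  assumes alg: "in_variety ar Sig A F" and gumm: "gumm_terms ar Sig n p j"
  shows "gumm_operations A (eval3 F p) (\<lambda>i. eval3 F (j i)) n"
proof -
  have tp: "ternary_trm ar p" and tj: "\<And>i. i \<in> {1..n+1} \<Longrightarrow> ternary_trm ar (j i)"
    using gumm unfolding gumm_terms_def by auto
  note eq = derivable_eval_val3[OF alg]
  show ?thesis
  proof
    fix i u v assume i: "i \<in> {1..n+1}" and "u \<in> A" "v \<in> A"
    moreover have "derivable ar Sig vx (app3 (j i) vx vy vx)"
      using gumm i unfolding gumm_terms_def by blast
    ultimately show "eval3 F (j i) u v u = u"
      using eq[of vx "app3 (j i) vx vy vx" u v u] by (simp add: eval_app3[OF tj[OF i]] val3_def)
  next
    fix u w assume "u \<in> A" "w \<in> A"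
    moreover have "derivable ar Sig vx (app3 p vx vz vz)"
      and "derivable ar Sig (app3 p vx vx vz) (app3 (j 1) vx vx vz)"
      using gumm unfolding gumm_terms_def by blast+
    ultimately show "eval3 F p u w w = u" "eval3 F p u u w = eval3 F (j 1) u u w"
      using eq[of vx "app3 p vx vz vz" u w w] eq[of "app3 p vx vx vz" "app3 (j 1) vx vx vz" u u w]
      by (simp_all add: eval_app3[OF tp] eval_app3[OF tj] val3_def)
  next
    fix i u w assume i: "i \<in> {1..n}" "odd i" and "u \<in> A" "w \<in> A"
    moreover have "derivable ar Sig (app3 (j i) vx vz vz) (app3 (j (Suc i)) vx vz vz)"
      using gumm i unfolding gumm_terms_def by simp
    moreover have "i \<in> {1..n+1}" "Suc i \<in> {1..n+1}" using i by auto
    ultimately show "eval3 F (j i) u w w = eval3 F (j (Suc i)) u w w"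
      using eq[of "app3 (j i) vx vz vz" "app3 (j (Suc i)) vx vz vz" u u w]
      by (simp add: eval_app3[OF tj] val3_def)
  next
    fix i u w assume i: "i \<in> {1..n}" "even i" and "u \<in> A" "w \<in> A"
    moreover have "derivable ar Sig (app3 (j i) vx vx vz) (app3 (j (Suc i)) vx vx vz)"
      using gumm i unfolding gumm_terms_def by simp
    moreover have "i \<in> {1..n+1}" "Suc i \<in> {1..n+1}" using i by auto
    ultimately show "eval3 F (j i) u u w = eval3 F (j (Suc i)) u u w"
      using eq[of "app3 (j i) vx vx vz" "app3 (j (Suc i)) vx vx vz" u u w]
      by (simp add: eval_app3[OF tj] val3_def)
  next
    fix u v w assume "u \<in> A" "v \<in> A" "w \<in> A"
    moreover have "derivable ar Sig (app3 (j (Suc n)) vx vy vz) vz"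
      using gumm unfolding gumm_terms_def by simp
    ultimately show "eval3 F (j (Suc n)) u v w = w"
      using eq[of "app3 (j (Suc n)) vx vy vz" vz u v w]
      by (simp add: eval_app3[OF tj] val3_def)
  qed
qed

lemma gumm_congruence_eval3:
  assumes alg: "in_variety ar Sig A F" and gumm: "gumm_terms ar Sig n p j"
    and \<theta>: "is_congruence ar A F \<theta>"
  shows "gumm_operations.congruence A (eval3 F p) (\<lambda>i. eval3 F (j i)) n \<theta>"
proof -
  interpret gumm_operations A "eval3 F p" "\<lambda>i. eval3 F (j i)" n
    by (rule gumm_operations_eval3[OF alg gumm])
  have "compatible3 \<theta> (eval3 F t)" if "ternary_trm ar t" for t
    unfolding compatible3_def eval3_def
    by (intro allI impI eval_trm_congruence[OF \<theta>])
      (use that in \<open>auto simp: ternary_trm_def val3_def\<close>)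
  then show ?thesis
    using gumm \<theta> unfolding congruence_def gumm_terms_def is_congruence_def by auto
qed


theorem theorem4p5:
  fixes ar :: "'f \<Rightarrow> nat" and Sig :: "('f trm \<times> 'f trm) set"
    and n :: nat and p :: "'f trm" and j :: "nat \<Rightarrow> 'f trm"
    and A :: "'a set" and F :: "'f \<Rightarrow> 'a list \<Rightarrow> 'a"
    and \<alpha> \<beta> \<gamma> :: "'a rel"
  assumes Sig_wf: "\<forall>(s, t)\<in>Sig. wf_trm ar s \<and> wf_trm ar t"
    and gumm: "gumm_terms ar Sig n p j"
    and alg: "in_variety ar Sig A F"
    and ca: "is_congruence ar A F \<alpha>"
    and cb: "is_congruence ar A F \<beta>"
    and cg: "is_congruence ar A F \<gamma>"
  shows "(\<forall>h m. m = 4 * h + 2 \<longrightarrow>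
            \<alpha> \<inter> altcomp \<beta> \<gamma> (m + 1)
              \<subseteq> (\<alpha> \<inter> altcomp \<gamma> \<beta> (2 * h + 2)) O altcomp (\<alpha> \<inter> \<gamma>) (\<alpha> \<inter> \<beta>) (m * n)
          \<and> \<alpha> \<inter> altcomp \<beta> \<gamma> (m + 1)
              \<subseteq> altcomp (\<alpha> \<inter> \<beta>) (\<alpha> \<inter> \<gamma>) (m * n) O (\<alpha> \<inter> altcomp \<beta> \<gamma> (2 * h + 2)))
       \<and> (\<forall>h m. h \<ge> 1 \<longrightarrow> m = 4 * h \<longrightarrow>
            \<alpha> \<inter> altcomp \<beta> \<gamma> (m + 1)
              \<subseteq> (\<alpha> \<inter> altcomp \<beta> \<gamma> (2 * h + 1)) O altcomp (\<alpha> \<inter> \<gamma>) (\<alpha> \<inter> \<beta>) (m * n))"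
proof -
  interpret gumm_operations A "eval3 F p" "\<lambda>i. eval3 F (j i)" n
    by (rule gumm_operations_eval3[OF alg gumm])
  have cong: "congruence \<alpha>" "congruence \<beta>" "congruence \<gamma>"
    using gumm_congruence_eval3[OF alg gumm] ca cb cg by blast+
  have sym: "sym \<alpha>" "sym \<beta>" "sym \<gamma>" "sym (\<alpha> \<inter> \<beta>)" "sym (\<alpha> \<inter> \<gamma>)"
    using congruenceD(2)[OF cong(1)] congruenceD(2)[OF cong(2)] congruenceD(2)[OF cong(3)]
    by (auto intro: sym_Int)
  note conv = converse_altcomp[OF sym(2,3)] converse_altcomp[OF sym(3,2)]
    converse_altcomp[OF sym(4,5)] converse_altcomp[OF sym(5,4)]
  have first: "\<alpha> \<inter> altcomp \<beta> \<gamma> (4 * h + 2 + 1)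
      \<subseteq> (\<alpha> \<inter> altcomp \<gamma> \<beta> (2 * h + 2)) O altcomp (\<alpha> \<inter> \<gamma>) (\<alpha> \<inter> \<beta>) ((4 * h + 2) * n)" for h
    using Int_altcomp_odd_subset[OF cong, of "2 * h + 1"] conv by (simp del: altcomp.simps add: algebra_simps)
  have "\<alpha> \<inter> altcomp \<beta> \<gamma> (4 * h + 2 + 1)
      \<subseteq> altcomp (\<alpha> \<inter> \<beta>) (\<alpha> \<inter> \<gamma>) ((4 * h + 2) * n) O (\<alpha> \<inter> altcomp \<beta> \<gamma> (2 * h + 2))" for h
    using converse_mono[THEN iffD2, OF first[of h]] sym(1) conv
    by (simp del: altcomp.simps add: converse_relcomp converse_Int sym_conv_converse_eq)
  moreover have "\<alpha> \<inter> altcomp \<beta> \<gamma> (4 * h + 1)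
      \<subseteq> (\<alpha> \<inter> altcomp \<beta> \<gamma> (2 * h + 1)) O altcomp (\<alpha> \<inter> \<gamma>) (\<alpha> \<inter> \<beta>) (4 * h * n)" if "h \<ge> 1" for h
    using Int_altcomp_odd_subset[OF cong, of "2 * h"] that conv by (simp del: altcomp.simps add: algebra_simps)
  ultimately show ?thesis using first by blast
qed

end
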